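(* Let $\mathbb{M}$ be a weight sequence with sequence of quotients $\mathbf{m}=(m_p)_{p\in\mathbb{N}_0}$, and let $\alpha>0$. The following are equivalent: (i) there exists $C>0$ such that $\sum_{k=0}^{p}\frac{(k+1)^{\alpha-1}}{m_k}\le C\frac{(p+1)^{\alpha}}{m_p}$ for all $p\in\mathbb{N}_0$; (ii) there exists $\varepsilon\in(0,\alpha)$ such that $(m_p/p^{\alpha-\varepsilon})_{p\in\mathbb{N}}$ is almost decreasing; (iii) there exists a sequence $\mathbf{h}\simeq\mathbf{m}$ such that $((p+1)^{-\alpha}h_p)_{p\in\mathbb{N}_0}$ is nonincreasing and $\sup_{p\ge1}\frac{h_{2p}}{h_p}<2^{\alpha}$; (iv) $\lim_{k\to\infty}\limsup_{p\to\infty}\frac{m_{kp}}{k^{\alpha}m_p}=0$; (v) there exists $k\in\mathbb{N}$, $k\ge2$, such that $\limsup_{p\to\infty}\frac{m_{kp}}{m_p}<k^{\alpha}$; (vi) for every $\theta\in(0,1)$ there exists $k\in\mathbb{N}$, $k\ge2$, such that $m_{kp}\le\theta k^{\alpha}m_p$ for every $p\in\mathbb{N}$; (vii) $\alpha(\mathbf{m})<\alpha$; (viii) there exists $C>0$ such that $\sum_{k=p+1}^{\infty}\frac{m_k}{(k+1)^{1+\alpha}}\le C\frac{m_p}{(p+1)^{\alpha}}$ for every $p\in\mathbb{N}_0$.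
   Context: A weight sequence is a sequence $\mathbb{M}=(M_p)_{p\in\mathbb{N}_0}$ of positive reals with $M_0=1$, logarithmically convex ($M_p^2\le M_{p-1}M_{p+1}$ for $p\in\mathbb{N}$) and $\lim_{p\to\infty}M_p^{1/p}=\infty$; its quotients are $m_p=M_{p+1}/M_p$. A sequence $(a_p)_{p\in\mathbb{N}}$ is almost decreasing if there is $m>0$ with $m\,a_q\le a_p$ for all $p\le q$. $\mathbf{h}\simeq\mathbf{m}$ means there is $c\ge1$ with $c^{-1}m_p\le h_p\le cm_p$ for all $p$. $\alpha(\mathbf{m})$ is the upper Matuszewska index of the sequence $(m_{p-1})_{p\in\mathbb{N}}$, defined as $\alpha(f)$ for the step function $f(x)=m_{\lfloor x\rfloor-1}$, $x\ge1$, where $\alpha(f):=\inf\{\alpha\in\mathbb{R}:\exists C_\alpha>0\ \forall\Lambda>1,\ \limsup_{x\to\infty}\sup_{\lambda\in[1,\Lambda]}\frac{f(\lambda x)}{\lambda^{\alpha}f(x)}\le C_\alpha\}$ ($\inf\emptyset=\infty$). *)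

theory Defs
  imports "HOL-Analysis.Analysis"
begin

definition weight_sequence :: "(nat \<Rightarrow> real) \<Rightarrow> bool" where
  "weight_sequence M \<longleftrightarrow>
     (\<forall>p. 0 < M p) \<and> M 0 = 1 \<and>
     (\<forall>p\<ge>1. (M p)\<^sup>2 \<le> M (p - 1) * M (p + 1)) \<and>
     filterlim (\<lambda>p. M p powr (1 / real p)) at_top sequentially"

definition quotients :: "(nat \<Rightarrow> real) \<Rightarrow> nat \<Rightarrow> real" where
  "quotients M p = M (Suc p) / M p"

definition almost_decreasing :: "(nat \<Rightarrow> real) \<Rightarrow> bool" where
  "almost_decreasing a \<longleftrightarrow> (\<exists>m>0. \<forall>p q. 1 \<le> p \<longrightarrow> p \<le> q \<longrightarrow> m * a q \<le> a p)"

definition seq_equiv :: "(nat \<Rightarrow> real) \<Rightarrow> (nat \<Rightarrow> real) \<Rightarrow> bool" where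
  "seq_equiv h m \<longleftrightarrow> (\<exists>c\<ge>1. \<forall>p. m p / c \<le> h p \<and> h p \<le> c * m p)"

text \<open>Upper Matuszewska index of a function f (values in extended reals, Inf of empty set = infinity).\<close>
definition upper_matuszewska :: "(real \<Rightarrow> real) \<Rightarrow> ereal" where
  "upper_matuszewska f = Inf {ereal a | a. \<exists>C>0. \<forall>\<Lambda>>1.
      Limsup at_top (\<lambda>x. SUP t\<in>{1..\<Lambda>}. ereal (f (t * x) / (t powr a * f x))) \<le> ereal C}"

definition alpha_index :: "(nat \<Rightarrow> real) \<Rightarrow> ereal" where
  "alpha_index m = upper_matuszewska (\<lambda>x. m (nat \<lfloor>x\<rfloor> - 1))"

end

theory Submission
  imports Defs
begin

(*
  All eight conditions are equivalent to a hub condition: for some \<beta> < \<alpha> and D,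
  m q / (q + 1) ^ \<beta> \<le> D * m p / (p + 1) ^ \<beta> whenever p \<le> q.  From the hub, (i) and (viii)
  follow by comparison with the power sums of (k + 1) ^ (\<epsilon> - 1) and (k + 1) ^ (- 1 - \<epsilon>),
  where \<epsilon> = \<alpha> - \<beta>; (iii) follows with h p = (p + 1) ^ \<beta> * sup {m q / (q + 1) ^ \<beta> | q \<ge> p};
  (ii) is the hub up to the shift of indices; and (iv) and (vii) follow from
  m q \<le> D ((q + 1) / (p + 1)) ^ \<beta> m p for p \<le> q.

  Conversely, (ii), (iv), (v) and (vii) each give some k \<ge> 2 and B < k ^ \<alpha> with
  m (k p) \<le> B m p for all large p.  Iterating this along powers of k, and using that m is
  nondecreasing in between, gives back the hub for any \<beta> < \<alpha> with B < k ^ \<beta>.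
  Under (i), (iii) or (viii), the partial sums, the sequence h, or the tail sums change by a
  fixed factor when p is doubled; this yields m (2 ^ n p) \<le> A s ^ n m p with s < 2 ^ \<alpha>,
  hence (vi), and (vi) implies (v).
*)

section \<open>Power sums\<close>

lemma powr_Suc_diff_mvt:
  fixes x g :: real
  assumes "0 < x"
  obtains z where "x < z" "z < x + 1" "(x + 1) powr g - x powr g = g * z powr (g - 1)"
proof -
  have "\<exists>z. x < z \<and> z < x + 1 \<and> (x + 1) powr g - x powr g = (x + 1 - x) * (g * z powr (g - 1))"
    using assms by (intro MVT2) (auto intro!: has_real_derivative_powr)
  then show ?thesis using that by auto
qed

lemma powr_Suc_diff_le:
  fixes x g :: real
  assumes "0 \<le> x" "1 \<le> g"
  shows "(x + 1) powr g - x powr g \<le> g * (x + 1) powr (g - 1)"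
proof (cases "x = 0")
  case False
  then obtain z where z: "x < z" "z < x + 1" and eq: "(x + 1) powr g - x powr g = g * z powr (g - 1)"
    using powr_Suc_diff_mvt assms(1) by (metis order_le_less)
  have "z powr (g - 1) \<le> (x + 1) powr (g - 1)"
    using z assms by (intro powr_mono2) auto
  then show ?thesis unfolding eq using assms by simp
qed (use assms in simp)

lemma powr_Suc_diff_ge:
  fixes x g :: real
  assumes "0 \<le> x" "0 \<le> g" "g \<le> 1"
  shows "g * (x + 1) powr (g - 1) \<le> (x + 1) powr g - x powr g"
proof (cases "x = 0")
  case False
  then obtain z where z: "x < z" "z < x + 1" and eq: "(x + 1) powr g - x powr g = g * z powr (g - 1)"
    using powr_Suc_diff_mvt assms(1) by (metis order_le_less)
  have "(x + 1) powr (g - 1) \<le> z powr (g - 1)"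
    using z assms by (intro powr_mono2') auto
  then show ?thesis unfolding eq using assms by (simp add: mult_left_mono)
qed (use assms in simp)

lemma sum_powr_le:
  fixes e :: real
  assumes "0 < e"
  shows "(\<Sum>k<n. real (k + 1) powr (e - 1)) \<le> max 1 (1 / e) * real n powr e"
proof (cases "1 \<le> e")
  case True
  have "(\<Sum>k<n. real (k + 1) powr (e - 1)) \<le> (\<Sum>k<n. real n powr (e - 1))"
    using True by (intro sum_mono powr_mono2) auto
  also have "\<dots> = real n powr e"
    by (cases "n = 0") (simp_all add: powr_diff)
  also have "\<dots> \<le> max 1 (1 / e) * real n powr e"
    by (simp add: mult_le_cancel_right1)
  finally show ?thesis .
next
  case False
  have "e * real (k + 1) powr (e - 1) \<le> real (Suc k) powr e - real k powr e" for k
    using powr_Suc_diff_ge[of "real k" e] False assms by (simp add: add.commute)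
  then have "e * (\<Sum>k<n. real (k + 1) powr (e - 1)) \<le> (\<Sum>k<n. real (Suc k) powr e - real k powr e)"
    unfolding sum_distrib_left by (intro sum_mono)
  also have "\<dots> = real n powr e"
    using sum_lessThan_telescope[of "\<lambda>k. real k powr e" n] by simp
  finally show ?thesis
    using assms False by (simp add: field_simps max_def)
qed

lemma sum_powr_ge:
  fixes e :: real
  assumes "0 < e"
  shows "min 1 (1 / e) * real n powr e \<le> (\<Sum>k<n. real (k + 1) powr (e - 1))"
proof (cases "e \<le> 1")
  case True
  have "real n powr e = (\<Sum>k<n. real n powr (e - 1))"
    by (cases "n = 0") (simp_all add: powr_diff)
  also have "\<dots> \<le> (\<Sum>k<n. real (k + 1) powr (e - 1))"
    using True by (intro sum_mono powr_mono2') auto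
  moreover have "min 1 (1 / e) * real n powr e \<le> real n powr e"
    by (simp add: mult_le_cancel_right2)
  ultimately show ?thesis by linarith
next
  case False
  have "real n powr e = (\<Sum>k<n. real (Suc k) powr e - real k powr e)"
    using sum_lessThan_telescope[of "\<lambda>k. real k powr e" n] by simp
  also have "\<dots> \<le> e * (\<Sum>k<n. real (k + 1) powr (e - 1))"
    unfolding sum_distrib_left using False powr_Suc_diff_le[of "real k" e for k]
    by (intro sum_mono) (simp add: add.commute)
  finally show ?thesis
    using assms False by (simp add: field_simps min_def)
qed

lemma suminf_powr_tail_le:
  fixes e :: real and n :: nat
  assumes "0 < e"
  shows "summable (\<lambda>j. real (n + 1 + j + 1) powr (- 1 - e))"
    and "(\<Sum>j. real (n + 1 + j + 1) powr (- 1 - e)) \<le> real (n + 1) powr - e / e"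
proof -
  let ?f = "\<lambda>j. real (j + (n + 1)) powr - e"
  have "(\<lambda>j. real j powr - e) \<longlonglongrightarrow> 0"
    using assms by (intro tendsto_neg_powr filterlim_real_sequentially) auto
  then have "?f \<longlonglongrightarrow> 0"
    by (rule LIMSEQ_ignore_initial_segment)
  then have tel: "(\<lambda>j. (?f j - ?f (Suc j)) / e) sums (real (n + 1) powr - e / e)"
    using sums_divide[OF telescope_sums', of ?f 0 e] by simp
  have term_le: "real (n + 1 + j + 1) powr (- 1 - e) \<le> (?f j - ?f (Suc j)) / e" for j
  proof -
    have "0 < real (j + (n + 1))" using assms by simp
    then obtain z where z: "real (j + (n + 1)) < z" "z < real (j + (n + 1)) + 1"
      and eq: "(real (j + (n + 1)) + 1) powr - e - real (j + (n + 1)) powr - e = - e * z powr (- e - 1)"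
      by (rule powr_Suc_diff_mvt)
    have "real (n + 1 + j + 1) powr (- 1 - e) \<le> z powr (- 1 - e)"
      using z assms by (intro powr_mono2') (auto simp: add.commute)
    also have "\<dots> = (?f j - ?f (Suc j)) / e"
    proof -
      have "?f (Suc j) = (real (j + (n + 1)) + 1) powr - e"
        by (simp add: add_ac)
      moreover have "z powr (- e - 1) = z powr (- 1 - e)"
        by (rule arg_cong[where f = "\<lambda>a. z powr a"]) simp
      ultimately show ?thesis
        using eq assms by (simp add: field_simps)
    qed
    finally show ?thesis .
  qed
  have summable_bound: "summable (\<lambda>j. (?f j - ?f (Suc j)) / e)"
    using tel by (rule sums_summable)
  show summable: "summable (\<lambda>j. real (n + 1 + j + 1) powr (- 1 - e))"
  proof (rule summable_comparison_test'[OF summable_bound])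
    show "norm (real (n + 1 + j + 1) powr (- 1 - e)) \<le> (?f j - ?f (Suc j)) / e" for j
      using term_le[of j] by simp
  qed
  show "(\<Sum>j. real (n + 1 + j + 1) powr (- 1 - e)) \<le> real (n + 1) powr - e / e"
    using suminf_le[OF term_le summable summable_bound] sums_unique[OF tel] by simp
qed

section \<open>Growth bounded by a power of the index\<close>

(* Condition (ii) shifted to indices from 0: m p / (p + 1) ^ \<beta> is almost decreasing over all
   p \<ge> 0, with constant 1 / D. *)
definition growth_le_powr :: "(nat \<Rightarrow> real) \<Rightarrow> real \<Rightarrow> real \<Rightarrow> bool" where
  "growth_le_powr m \<beta> D \<longleftrightarrow>
     (\<forall>p q. p \<le> q \<longrightarrow> m q / real (q + 1) powr \<beta> \<le> D * (m p / real (p + 1) powr \<beta>))"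

lemma growth_le_powrD:
  "growth_le_powr m \<beta> D \<Longrightarrow> p \<le> q \<Longrightarrow> m q / real (q + 1) powr \<beta> \<le> D * (m p / real (p + 1) powr \<beta>)"
  unfolding growth_le_powr_def by blast

lemma growth_le_powr_const_ge_one:
  assumes "growth_le_powr m \<beta> D" and "0 < m 0"
  shows "1 \<le> D"
  using growth_le_powrD[OF assms(1) order.refl, of 0] assms(2) by simp

lemma growth_le_powr_imp_partial_sum_bound:
  fixes m :: "nat \<Rightarrow> real"
  assumes pos: "\<And>p. 0 < m p" and growth: "growth_le_powr m \<beta> D" and "\<beta> < \<alpha>"
  shows "\<exists>C>0. \<forall>p. (\<Sum>k\<le>p. real (k + 1) powr (\<alpha> - 1) / m k) \<le> C * real (p + 1) powr \<alpha> / m p"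
proof -
  define \<epsilon> where "\<epsilon> = \<alpha> - \<beta>"
  have "0 < \<epsilon>" and D: "1 \<le> D"
    using assms growth_le_powr_const_ge_one by (auto simp: \<epsilon>_def)
  have term_bound: "real (k + 1) powr (\<alpha> - 1) / m k
      \<le> D * real (p + 1) powr \<beta> / m p * real (k + 1) powr (\<epsilon> - 1)" if "k \<le> p" for k p
  proof -
    have "m p / real (p + 1) powr \<beta> \<le> D * (m k / real (k + 1) powr \<beta>)"
      using growth_le_powrD[OF growth that] .
    then have "real (k + 1) powr \<beta> / m k \<le> D * real (p + 1) powr \<beta> / m p"
      using pos[of k] pos[of p] by (simp add: field_simps)
    then have "real (k + 1) powr (\<epsilon> - 1) * (real (k + 1) powr \<beta> / m k)
        \<le> real (k + 1) powr (\<epsilon> - 1) * (D * real (p + 1) powr \<beta> / m p)"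
      by (rule mult_left_mono) simp
    moreover have "real (k + 1) powr (\<alpha> - 1) = real (k + 1) powr (\<epsilon> - 1) * real (k + 1) powr \<beta>"
      by (simp add: \<epsilon>_def flip: powr_add)
    ultimately show ?thesis
      by (simp add: mult.commute)
  qed
  show ?thesis
  proof (intro exI[of _ "D * max 1 (1 / \<epsilon>)"] conjI allI)
    show "0 < D * max 1 (1 / \<epsilon>)"
      using D by (intro mult_pos_pos) (auto simp: less_max_iff_disj)
    fix p
    have "(\<Sum>k\<le>p. real (k + 1) powr (\<alpha> - 1) / m k)
        \<le> (\<Sum>k\<le>p. D * real (p + 1) powr \<beta> / m p * real (k + 1) powr (\<epsilon> - 1))"
      by (intro sum_mono term_bound) simp
    also have "\<dots> = D * real (p + 1) powr \<beta> / m p * (\<Sum>k<Suc p. real (k + 1) powr (\<epsilon> - 1))"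
      by (simp add: sum_distrib_left lessThan_Suc_atMost)
    also have "\<dots> \<le> D * real (p + 1) powr \<beta> / m p * (max 1 (1 / \<epsilon>) * real (Suc p) powr \<epsilon>)"
      using pos[of p] D \<open>0 < \<epsilon>\<close> by (intro mult_left_mono sum_powr_le) auto
    also have "\<dots> = D * max 1 (1 / \<epsilon>) * real (p + 1) powr \<alpha> / m p"
      by (simp add: \<epsilon>_def flip: powr_add)
    finally show "(\<Sum>k\<le>p. real (k + 1) powr (\<alpha> - 1) / m k) \<le> D * max 1 (1 / \<epsilon>) * real (p + 1) powr \<alpha> / m p" .
  qed
qed

lemma growth_le_powr_imp_almost_decreasing:
  fixes m :: "nat \<Rightarrow> real"
  assumes pos: "\<And>p. 0 < m p" and growth: "growth_le_powr m \<beta> D" and "0 \<le> \<beta>"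
  shows "almost_decreasing (\<lambda>p. m p / real p powr \<beta>)"
  unfolding almost_decreasing_def
proof (intro exI[of _ "1 / (2 powr \<beta> * D)"] conjI allI impI)
  have D: "1 \<le> D"
    using growth pos growth_le_powr_const_ge_one by blast
  then show "0 < 1 / (2 powr \<beta> * D)"
    by simp
  fix p q :: nat
  assume "1 \<le> p" "p \<le> q"
  have "real (q + 1) powr \<beta> \<le> 2 powr \<beta> * real q powr \<beta>"
    using \<open>1 \<le> p\<close> \<open>p \<le> q\<close> \<open>0 \<le> \<beta>\<close> by (auto simp flip: powr_mult intro: powr_mono2)
  then have "m q / real q powr \<beta> \<le> 2 powr \<beta> * (m q / real (q + 1) powr \<beta>)"
    using pos[of q] \<open>1 \<le> p\<close> \<open>p \<le> q\<close> by (simp add: field_simps)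
  also have "\<dots> \<le> 2 powr \<beta> * (D * (m p / real (p + 1) powr \<beta>))"
    by (intro mult_left_mono growth_le_powrD[OF growth \<open>p \<le> q\<close>]) simp
  also have "\<dots> \<le> 2 powr \<beta> * (D * (m p / real p powr \<beta>))"
    using pos[of p] D \<open>1 \<le> p\<close> \<open>0 \<le> \<beta>\<close>
    by (intro mult_left_mono divide_left_mono powr_mono2) auto
  finally have "1 / (2 powr \<beta> * D) * (m q / real q powr \<beta>)
      \<le> 1 / (2 powr \<beta> * D) * ((2 powr \<beta> * D) * (m p / real p powr \<beta>))"
    using D by (intro mult_left_mono) (simp_all add: mult.assoc)
  then show "1 / (2 powr \<beta> * D) * (m q / real q powr \<beta>) \<le> m p / real p powr \<beta>"
    using D by simp
qed

definition powr_regularization :: "(nat \<Rightarrow> real) \<Rightarrow> real \<Rightarrow> nat \<Rightarrow> real" where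
  "powr_regularization m \<beta> p = real (p + 1) powr \<beta> * (SUP q\<in>{p..}. m q / real (q + 1) powr \<beta>)"

lemma growth_le_powr_bdd_above:
  assumes "growth_le_powr m \<beta> D"
  shows "bdd_above ((\<lambda>q. m q / real (q + 1) powr \<beta>) ` A)"
  using growth_le_powrD[OF assms, of 0] by (intro bdd_aboveI2[of _ _ "D * m 0"]) simp

lemma powr_regularization_div_eq:
  "powr_regularization m \<beta> p / real (p + 1) powr \<beta> = (SUP q\<in>{p..}. m q / real (q + 1) powr \<beta>)"
  by (simp add: powr_regularization_def)

lemma powr_regularization_antimono:
  assumes "growth_le_powr m \<beta> D" and "p \<le> q"
  shows "powr_regularization m \<beta> q / real (q + 1) powr \<beta> \<le> powr_regularization m \<beta> p / real (p + 1) powr \<beta>"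
  unfolding powr_regularization_div_eq using assms(2)
  by (intro cSUP_subset_mono growth_le_powr_bdd_above[OF assms(1)]) auto

lemma powr_regularization_ge:
  assumes "growth_le_powr m \<beta> D"
  shows "m p / real (p + 1) powr \<beta> \<le> powr_regularization m \<beta> p / real (p + 1) powr \<beta>"
  unfolding powr_regularization_div_eq by (intro cSUP_upper growth_le_powr_bdd_above[OF assms]) simp

lemma powr_regularization_le:
  assumes "growth_le_powr m \<beta> D"
  shows "powr_regularization m \<beta> p / real (p + 1) powr \<beta> \<le> D * (m p / real (p + 1) powr \<beta>)"
  unfolding powr_regularization_div_eq by (intro cSUP_least growth_le_powrD[OF assms]) auto

lemma growth_le_powr_imp_regularization:
  fixes m :: "nat \<Rightarrow> real"
  assumes pos: "\<And>p. 0 < m p" and growth: "growth_le_powr m \<beta> D" and "0 \<le> \<beta>" "\<beta> < \<alpha>"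
  shows "\<exists>h. seq_equiv h m \<and>
           (\<forall>p. real (Suc p + 1) powr (- \<alpha>) * h (Suc p) \<le> real (p + 1) powr (- \<alpha>) * h p) \<and>
           (SUP p\<in>{1..}. ereal (h (2 * p) / h p)) < ereal (2 powr \<alpha>)"
proof (intro exI[of _ "powr_regularization m \<beta>"] conjI allI)
  let ?h = "powr_regularization m \<beta>"
  let ?g = "\<lambda>p. ?h p / real (p + 1) powr \<beta>"
  have powr_pos: "0 < real (p + 1) powr \<beta>" for p
    by (simp only: powr_gt_zero of_nat_eq_0_iff add_eq_0_iff_both_eq_0 one_neq_zero simp_thms)
  have h_eq: "?h p = real (p + 1) powr \<beta> * ?g p" for p
    by simp
  have g_pos: "0 < ?g p" for p
    using pos[of p] by (intro less_le_trans[OF _ powr_regularization_ge[OF growth]]) simp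
  have h_ge: "m p \<le> ?h p" for p
    using powr_regularization_ge[OF growth, of p] powr_pos[of p] by (simp add: divide_le_cancel)
  have h_pos: "0 < ?h p" for p
    using pos[of p] h_ge[of p] by linarith
  have "1 \<le> D"
    using growth pos growth_le_powr_const_ge_one by blast
  show "seq_equiv ?h m"
    unfolding seq_equiv_def
  proof (intro exI[of _ D] conjI allI)
    fix p
    note h_ge[of p]
    moreover have "m p / D \<le> m p"
      using \<open>1 \<le> D\<close> pos[of p] by (simp add: field_simps)
    ultimately show "m p / D \<le> ?h p"
      by linarith
    show "?h p \<le> D * m p"
      using powr_regularization_le[OF growth, of p] powr_pos[of p] by (simp add: divide_le_cancel)
  qed (fact \<open>1 \<le> D\<close>)
  have shift: "x powr (- \<alpha>) * (x powr \<beta> * c) = x powr (\<beta> - \<alpha>) * c" for x c :: real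
    by (simp add: powr_diff powr_minus divide_inverse ac_simps)
  fix p
  have "real (Suc p + 1) powr (\<beta> - \<alpha>) * ?g (Suc p) \<le> real (p + 1) powr (\<beta> - \<alpha>) * ?g p"
    using g_pos[of p] g_pos[of "Suc p"] \<open>\<beta> < \<alpha>\<close> powr_regularization_antimono[OF growth, of p "Suc p"]
    by (intro mult_mono powr_mono2') (auto intro: less_imp_le)
  then show "real (Suc p + 1) powr (- \<alpha>) * ?h (Suc p) \<le> real (p + 1) powr (- \<alpha>) * ?h p"
    by (subst (1 2) h_eq) (simp only: shift)
  have "?h (2 * p) \<le> 2 powr \<beta> * ?h p" for p
  proof -
    have "?h (2 * p) \<le> (2 * real (p + 1)) powr \<beta> * ?g p"
      using g_pos[of p] g_pos[of "2 * p"] \<open>0 \<le> \<beta>\<close> powr_regularization_antimono[OF growth, of p "2 * p"]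
      by (subst h_eq) (intro mult_mono powr_mono2; auto intro: less_imp_le)
    also have "\<dots> = 2 powr \<beta> * ?h p"
      by (subst powr_mult) simp_all
    finally show ?thesis .
  qed
  then have "(SUP p\<in>{1..}. ereal (?h (2 * p) / ?h p)) \<le> ereal (2 powr \<beta>)"
    using h_pos by (intro SUP_least) (simp add: divide_le_eq)
  also have "\<dots> < ereal (2 powr \<alpha>)"
    using \<open>\<beta> < \<alpha>\<close> by simp
  finally show "(SUP p\<in>{1..}. ereal (?h (2 * p) / ?h p)) < ereal (2 powr \<alpha>)" .
qed

lemma dilation_of_weighted_bound:
  fixes m :: "nat \<Rightarrow> real"
  assumes "0 \<le> \<beta>" "1 \<le> k" "0 \<le> c" "0 \<le> m p"
    and bound: "m (k * p) / real (k * p + 1) powr \<beta> \<le> c * (m p / real (p + 1) powr \<beta>)"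
  shows "m (k * p) \<le> c * real k powr \<beta> * m p"
proof -
  have "0 < real (k * p + 1) powr \<beta>"
    by (simp only: powr_gt_zero of_nat_eq_0_iff add_eq_0_iff_both_eq_0 one_neq_zero simp_thms)
  with bound have "m (k * p) \<le> c * (m p / real (p + 1) powr \<beta>) * real (k * p + 1) powr \<beta>"
    by (simp only: pos_divide_le_eq)
  also have "\<dots> \<le> c * (m p / real (p + 1) powr \<beta>) * (real k powr \<beta> * real (p + 1) powr \<beta>)"
  proof (rule mult_left_mono)
    have "real (k * p + 1) powr \<beta> \<le> (real k * real (p + 1)) powr \<beta>"
      using assms(1,2) by (intro powr_mono2) (auto simp: algebra_simps)
    then show "real (k * p + 1) powr \<beta> \<le> real k powr \<beta> * real (p + 1) powr \<beta>"
      by (simp add: powr_mult)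
  qed (use assms(3,4) in simp)
  also have "\<dots> = c * real k powr \<beta> * m p"
    by simp
  finally show ?thesis .
qed

lemma growth_le_powr_dilation:
  fixes m :: "nat \<Rightarrow> real"
  assumes pos: "\<And>p. 0 < m p" and growth: "growth_le_powr m \<beta> D" and "0 \<le> \<beta>" "1 \<le> k"
  shows "m (k * p) \<le> D * real k powr \<beta> * m p"
proof (rule dilation_of_weighted_bound[OF \<open>0 \<le> \<beta>\<close> \<open>1 \<le> k\<close>])
  show "0 \<le> D"
    using growth pos growth_le_powr_const_ge_one[of m \<beta> D] by simp
  show "m (k * p) / real (k * p + 1) powr \<beta> \<le> D * (m p / real (p + 1) powr \<beta>)"
    using growth_le_powrD[OF growth, of p "k * p"] \<open>1 \<le> k\<close> by simp
qed (use pos[of p] in simp)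

lemma growth_le_powr_imp_limsup_dilation:
  fixes m :: "nat \<Rightarrow> real"
  assumes pos: "\<And>p. 0 < m p" and growth: "growth_le_powr m \<beta> D" and "0 \<le> \<beta>" "\<beta> < \<alpha>"
  shows "(\<lambda>k. limsup (\<lambda>p. ereal (m (k * p) / (real k powr \<alpha> * m p)))) \<longlonglongrightarrow> 0"
proof (rule tendsto_sandwich[of "\<lambda>k. 0" _ _ "\<lambda>k. ereal (D * real k powr (\<beta> - \<alpha>))"])
  show "\<forall>\<^sub>F k in sequentially. 0 \<le> limsup (\<lambda>p. ereal (m (k * p) / (real k powr \<alpha> * m p)))"
    using pos by (intro always_eventually allI le_Limsup) (auto intro!: divide_nonneg_nonneg mult_nonneg_nonneg less_imp_le[OF pos])
  show "\<forall>\<^sub>F k in sequentially.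
      limsup (\<lambda>p. ereal (m (k * p) / (real k powr \<alpha> * m p))) \<le> ereal (D * real k powr (\<beta> - \<alpha>))"
    unfolding eventually_sequentially
  proof (intro exI[of _ 1] allI impI Limsup_bounded always_eventually)
    fix k p :: nat
    assume "1 \<le> k"
    then have "m (k * p) / (real k powr \<alpha> * m p) \<le> D * real k powr \<beta> * m p / (real k powr \<alpha> * m p)"
      using growth_le_powr_dilation[OF pos growth \<open>0 \<le> \<beta>\<close>] pos[of p]
      by (intro divide_right_mono) auto
    also have "\<dots> = D * real k powr (\<beta> - \<alpha>)"
      using pos[of p] \<open>1 \<le> k\<close> by (simp add: powr_diff)
    finally show "ereal (m (k * p) / (real k powr \<alpha> * m p)) \<le> ereal (D * real k powr (\<beta> - \<alpha>))"
      by simp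
  qed
  have "(\<lambda>k. D * real k powr (\<beta> - \<alpha>)) \<longlonglongrightarrow> D * 0"
    using \<open>\<beta> < \<alpha>\<close> by (intro tendsto_mult tendsto_const tendsto_neg_powr filterlim_real_sequentially) auto
  then show "(\<lambda>k. ereal (D * real k powr (\<beta> - \<alpha>))) \<longlonglongrightarrow> 0"
    by (simp add: zero_ereal_def)
qed simp

lemma growth_le_powr_tail_term_le:
  fixes m :: "nat \<Rightarrow> real"
  assumes growth: "growth_le_powr m \<beta> D" and "p \<le> q"
  shows "m q / real (q + 1) powr (1 + \<alpha>)
    \<le> D * (m p / real (p + 1) powr \<beta>) * real (q + 1) powr (- 1 - (\<alpha> - \<beta>))"
proof -
  have "real (q + 1) powr (1 + \<alpha>) = real (q + 1) powr \<beta> * real (q + 1) powr (1 + (\<alpha> - \<beta>))"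
    by (simp flip: powr_add)
  moreover have "real (q + 1) powr (- 1 - (\<alpha> - \<beta>)) = inverse (real (q + 1) powr (1 + (\<alpha> - \<beta>)))"
    unfolding powr_minus[symmetric] by (rule arg_cong[where f = "\<lambda>a. real (q + 1) powr a"]) simp
  ultimately have "m q / real (q + 1) powr (1 + \<alpha>)
      = m q / real (q + 1) powr \<beta> * real (q + 1) powr (- 1 - (\<alpha> - \<beta>))"
    by (simp add: divide_inverse)
  also have "\<dots> \<le> D * (m p / real (p + 1) powr \<beta>) * real (q + 1) powr (- 1 - (\<alpha> - \<beta>))"
    by (intro mult_right_mono growth_le_powrD[OF growth \<open>p \<le> q\<close>]) simp
  finally show ?thesis .
qed

lemma growth_le_powr_imp_tail_bound:
  fixes m :: "nat \<Rightarrow> real"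
  assumes pos: "\<And>p. 0 < m p" and growth: "growth_le_powr m \<beta> D" and "\<beta> < \<alpha>"
  shows "\<exists>C>0. \<forall>p. summable (\<lambda>j. m (p + 1 + j) / real (p + 1 + j + 1) powr (1 + \<alpha>)) \<and>
           (\<Sum>j. m (p + 1 + j) / real (p + 1 + j + 1) powr (1 + \<alpha>)) \<le> C * m p / real (p + 1) powr \<alpha>"
proof (intro exI[of _ "D / (\<alpha> - \<beta>)"] conjI allI)
  define \<epsilon> where "\<epsilon> = \<alpha> - \<beta>"
  have "0 < \<epsilon>" and "1 \<le> D"
    using assms growth_le_powr_const_ge_one by (auto simp: \<epsilon>_def)
  then show "0 < D / (\<alpha> - \<beta>)"
    by (simp add: \<epsilon>_def)
  fix p
  define K where "K = D * (m p / real (p + 1) powr \<beta>)"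
  have "0 \<le> K"
    using \<open>1 \<le> D\<close> pos[of p] by (simp add: K_def)
  have term_le: "m (p + 1 + j) / real (p + 1 + j + 1) powr (1 + \<alpha>) \<le> K * real (p + 1 + j + 1) powr (- 1 - \<epsilon>)"
    for j
    unfolding K_def \<epsilon>_def by (rule growth_le_powr_tail_term_le[OF growth]) simp
  note tail = suminf_powr_tail_le[OF \<open>0 < \<epsilon>\<close>, of p]
  have summable_bound: "summable (\<lambda>j. K * real (p + 1 + j + 1) powr (- 1 - \<epsilon>))"
    using tail(1) by (rule summable_mult)
  show summable: "summable (\<lambda>j. m (p + 1 + j) / real (p + 1 + j + 1) powr (1 + \<alpha>))"
    using term_le pos by (intro summable_comparison_test'[OF summable_bound]) (simp add: less_imp_le)
  have "(\<Sum>j. m (p + 1 + j) / real (p + 1 + j + 1) powr (1 + \<alpha>)) \<le> K * (\<Sum>j. real (p + 1 + j + 1) powr (- 1 - \<epsilon>))"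
    using suminf_le[OF term_le summable summable_bound] suminf_mult[OF tail(1)] by simp
  also have "\<dots> \<le> K * (real (p + 1) powr - \<epsilon> / \<epsilon>)"
    using tail(2) \<open>0 \<le> K\<close> by (intro mult_left_mono) simp_all
  also have "\<dots> = D / (\<alpha> - \<beta>) * m p / real (p + 1) powr \<alpha>"
  proof -
    have "real (p + 1) powr - \<epsilon> = real (p + 1) powr \<beta> / real (p + 1) powr \<alpha>"
      unfolding powr_diff[symmetric] \<epsilon>_def by simp
    then show ?thesis
      by (simp add: K_def \<epsilon>_def)
  qed
  finally show "(\<Sum>j. m (p + 1 + j) / real (p + 1 + j + 1) powr (1 + \<alpha>)) \<le> D / (\<alpha> - \<beta>) * m p / real (p + 1) powr \<alpha>" .
qed

lemma upper_matuszewska_le: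
  fixes f :: "real \<Rightarrow> real"
  assumes "\<And>x t. X \<le> x \<Longrightarrow> 1 \<le> t \<Longrightarrow> f (t * x) / (t powr a * f x) \<le> C"
  shows "upper_matuszewska f \<le> ereal a"
  unfolding upper_matuszewska_def
proof (rule Inf_lower, intro CollectI exI conjI allI impI)
  show "0 < max C 1"
    by simp
  fix \<Lambda> :: real
  show "Limsup at_top (\<lambda>x. SUP t\<in>{1..\<Lambda>}. ereal (f (t * x) / (t powr a * f x))) \<le> ereal (max C 1)"
  proof (intro Limsup_bounded eventually_at_top_linorderI[of X] SUP_least)
    fix x t
    assume "X \<le> x" "t \<in> {1..\<Lambda>}"
    then have "f (t * x) / (t powr a * f x) \<le> C"
      by (intro assms) auto
    then show "ereal (f (t * x) / (t powr a * f x)) \<le> ereal (max C 1)"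
      by (simp add: le_max_iff_disj)
  qed
qed simp

lemma growth_le_powr_step_ratio:
  fixes m :: "nat \<Rightarrow> real"
  assumes pos: "\<And>p. 0 < m p" and growth: "growth_le_powr m \<beta> D" and "0 \<le> \<beta>"
    and "1 \<le> x" "1 \<le> t"
  shows "m (nat \<lfloor>t * x\<rfloor> - 1) / (t powr \<beta> * m (nat \<lfloor>x\<rfloor> - 1)) \<le> D * 2 powr \<beta>"
proof -
  have D: "1 \<le> D"
    using growth pos growth_le_powr_const_ge_one by blast
  define P where "P = nat \<lfloor>x\<rfloor>"
  define Q where "Q = nat \<lfloor>t * x\<rfloor>"
  have "x \<le> t * x"
    using assms by simp
  then have "1 \<le> P" "P \<le> Q"
    using \<open>1 \<le> x\<close> by (auto simp: P_def Q_def le_nat_iff intro: floor_mono)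
  have "real P = of_int \<lfloor>x\<rfloor>" "real Q = of_int \<lfloor>t * x\<rfloor>"
    using \<open>1 \<le> x\<close> \<open>x \<le> t * x\<close> by (simp_all add: P_def Q_def)
  then have "x \<le> 2 * real P" and "real Q \<le> t * x"
    using \<open>1 \<le> x\<close> real_of_int_floor_gt_diff_one[of x] one_le_floor[of x] by linarith+
  moreover have "t * x \<le> t * (2 * real P)"
    using \<open>x \<le> 2 * real P\<close> \<open>1 \<le> t\<close> by (intro mult_left_mono) auto
  ultimately have ratio: "real Q / real P \<le> 2 * t"
    using \<open>1 \<le> P\<close> by (simp add: divide_le_eq)
  have "m (Q - 1) / real Q powr \<beta> \<le> D * (m (P - 1) / real P powr \<beta>)"
    using growth_le_powrD[OF growth, of "P - 1" "Q - 1"] \<open>1 \<le> P\<close> \<open>P \<le> Q\<close> by simp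
  moreover have "0 < real Q powr \<beta>"
    using \<open>1 \<le> P\<close> \<open>P \<le> Q\<close> by simp
  ultimately have "m (Q - 1) \<le> D * (m (P - 1) / real P powr \<beta>) * real Q powr \<beta>"
    by (simp only: pos_divide_le_eq)
  also have "\<dots> = D * m (P - 1) * (real Q / real P) powr \<beta>"
    by (simp add: powr_divide)
  also have "\<dots> \<le> D * m (P - 1) * (2 * t) powr \<beta>"
    using ratio D pos[of "P - 1"] \<open>0 \<le> \<beta>\<close> by (intro mult_left_mono powr_mono2) auto
  also have "\<dots> = D * 2 powr \<beta> * (t powr \<beta> * m (P - 1))"
    using \<open>1 \<le> t\<close> by (simp add: powr_mult)
  finally have "m (Q - 1) \<le> D * 2 powr \<beta> * (t powr \<beta> * m (P - 1))" .
  moreover have "0 < t powr \<beta> * m (P - 1)"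
    using pos[of "P - 1"] \<open>1 \<le> t\<close> by simp
  ultimately have "m (Q - 1) / (t powr \<beta> * m (P - 1)) \<le> D * 2 powr \<beta>"
    by (simp only: pos_divide_le_eq)
  then show ?thesis
    by (simp only: P_def Q_def)
qed

lemma growth_le_powr_imp_alpha_index_le:
  fixes m :: "nat \<Rightarrow> real"
  assumes pos: "\<And>p. 0 < m p" and growth: "growth_le_powr m \<beta> D" and "0 \<le> \<beta>"
  shows "alpha_index m \<le> ereal \<beta>"
  unfolding alpha_index_def
proof (rule upper_matuszewska_le)
  fix x t :: real
  assume "1 \<le> x" "1 \<le> t"
  then show "m (nat \<lfloor>t * x\<rfloor> - 1) / (t powr \<beta> * m (nat \<lfloor>x\<rfloor> - 1)) \<le> D * 2 powr \<beta>"
    by (rule growth_le_powr_step_ratio[OF assms])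
qed

section \<open>Dilation bounds\<close>

(* Condition (v) with the limsup replaced by an eventual bound. *)
definition dilation_below_powr :: "(nat \<Rightarrow> real) \<Rightarrow> real \<Rightarrow> bool" where
  "dilation_below_powr m \<alpha> \<longleftrightarrow>
     (\<exists>k B. 2 \<le> k \<and> B < real k powr \<alpha> \<and> (\<forall>\<^sub>F p in sequentially. m (k * p) \<le> B * m p))"

lemma dilation_below_powrI:
  assumes "2 \<le> k" "B < real k powr \<alpha>" "\<And>p. N \<le> p \<Longrightarrow> m (k * p) \<le> B * m p"
  shows "dilation_below_powr m \<alpha>"
  unfolding dilation_below_powr_def eventually_sequentially using assms by blast

lemma exists_nat_powr_gt:
  fixes C e :: real
  assumes "0 < e"
  obtains k :: nat where "2 \<le> k" "C < real k powr e"
proof -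
  have "\<forall>\<^sub>F k in sequentially. C < real k powr e"
    using filterlim_compose[OF real_powr_at_top[OF assms] filterlim_real_sequentially]
    by (simp add: filterlim_at_top_dense)
  then obtain N where "\<And>k. N \<le> k \<Longrightarrow> C < real k powr e"
    unfolding eventually_sequentially by blast
  then show ?thesis
    using that[of "max N 2"] by simp
qed

lemma almost_decreasing_imp_dilation_below_powr:
  fixes m :: "nat \<Rightarrow> real"
  assumes pos: "\<And>p. 0 < m p" and "\<beta> < \<alpha>" and "almost_decreasing (\<lambda>p. m p / real p powr \<beta>)"
  shows "dilation_below_powr m \<alpha>"
proof -
  obtain c where "0 < c" and c: "\<And>p q. 1 \<le> p \<Longrightarrow> p \<le> q \<Longrightarrow> c * (m q / real q powr \<beta>) \<le> m p / real p powr \<beta>"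
    using assms(3) unfolding almost_decreasing_def by blast
  obtain k :: nat where "2 \<le> k" and k: "1 / c < real k powr (\<alpha> - \<beta>)"
    using exists_nat_powr_gt \<open>\<beta> < \<alpha>\<close> by (metis diff_gt_0_iff_gt)
  show ?thesis
  proof (rule dilation_below_powrI[OF \<open>2 \<le> k\<close>, of "real k powr \<beta> / c" _ 1])
    have "real k powr \<beta> * (1 / c) < real k powr \<beta> * real k powr (\<alpha> - \<beta>)"
      using k \<open>2 \<le> k\<close> by (intro mult_strict_left_mono) auto
    then show "real k powr \<beta> / c < real k powr \<alpha>"
      by (simp flip: powr_add)
    fix p :: nat
    assume "1 \<le> p"
    then have "c * (m (k * p) / real (k * p) powr \<beta>) \<le> m p / real p powr \<beta>"
      using c[of p "k * p"] \<open>2 \<le> k\<close> by simp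
    then show "m (k * p) \<le> real k powr \<beta> / c * m p"
      using \<open>0 < c\<close> \<open>1 \<le> p\<close> \<open>2 \<le> k\<close> by (simp add: powr_mult field_simps)
  qed
qed

lemma limsup_dilation_imp_dilation_below_powr:
  fixes m :: "nat \<Rightarrow> real"
  assumes pos: "\<And>p. 0 < m p"
    and lim: "(\<lambda>k. limsup (\<lambda>p. ereal (m (k * p) / (real k powr \<alpha> * m p)))) \<longlonglongrightarrow> 0"
  shows "dilation_below_powr m \<alpha>"
proof -
  obtain N where N: "\<And>k. N \<le> k \<Longrightarrow> limsup (\<lambda>p. ereal (m (k * p) / (real k powr \<alpha> * m p))) < ereal (1 / 2)"
    using order_tendstoD(2)[OF lim, of "ereal (1 / 2)"] by (auto simp: eventually_sequentially zero_ereal_def)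
  define k where "k = max N 2"
  have "2 \<le> k" "N \<le> k"
    by (simp_all add: k_def)
  then have "0 < real k powr \<alpha>"
    by simp
  have "\<forall>\<^sub>F p in sequentially. ereal (m (k * p) / (real k powr \<alpha> * m p)) < ereal (1 / 2)"
    using Limsup_lessD[OF N[OF \<open>N \<le> k\<close>]] .
  then have "\<forall>\<^sub>F p in sequentially. m (k * p) \<le> real k powr \<alpha> / 2 * m p"
    by eventually_elim (use pos \<open>0 < real k powr \<alpha>\<close> in \<open>simp add: field_simps\<close>)
  then show ?thesis
    unfolding dilation_below_powr_def using \<open>2 \<le> k\<close> \<open>0 < real k powr \<alpha>\<close>
    by (intro exI[of _ k] exI[of _ "real k powr \<alpha> / 2"]) auto
qed

lemma limsup_ratio_imp_dilation_below_powr: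
  fixes m :: "nat \<Rightarrow> real"
  assumes pos: "\<And>p. 0 < m p"
    and "\<exists>k::nat. 2 \<le> k \<and> limsup (\<lambda>p. ereal (m (k * p) / m p)) < ereal (real k powr \<alpha>)"
  shows "dilation_below_powr m \<alpha>"
proof -
  obtain k :: nat where "2 \<le> k" and lim: "limsup (\<lambda>p. ereal (m (k * p) / m p)) < ereal (real k powr \<alpha>)"
    using assms(2) by blast
  obtain B where B: "limsup (\<lambda>p. ereal (m (k * p) / m p)) < ereal B" "B < real k powr \<alpha>"
    using ereal_dense2[OF lim] by auto
  have "\<forall>\<^sub>F p in sequentially. m (k * p) \<le> B * m p"
    using Limsup_lessD[OF B(1)] by eventually_elim (use pos in \<open>simp add: field_simps\<close>)
  then show ?thesis
    unfolding dilation_below_powr_def using \<open>2 \<le> k\<close> B(2) by blast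
qed

lemma uniform_dilation_imp_limsup_ratio:
  fixes m :: "nat \<Rightarrow> real"
  assumes pos: "\<And>p. 0 < m p"
    and "\<forall>\<theta>. 0 < \<theta> \<and> \<theta> < 1 \<longrightarrow> (\<exists>k::nat. 2 \<le> k \<and> (\<forall>p\<ge>1. m (k * p) \<le> \<theta> * real k powr \<alpha> * m p))"
  shows "\<exists>k::nat. 2 \<le> k \<and> limsup (\<lambda>p. ereal (m (k * p) / m p)) < ereal (real k powr \<alpha>)"
proof -
  obtain k :: nat where "2 \<le> k" and bound: "\<forall>p\<ge>1. m (k * p) \<le> 1 / 2 * real k powr \<alpha> * m p"
    using assms(2)[rule_format, of "1 / 2"] by auto
  have "limsup (\<lambda>p. ereal (m (k * p) / m p)) \<le> ereal (1 / 2 * real k powr \<alpha>)"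
    by (intro Limsup_bounded eventually_sequentiallyI[of 1]) (use bound pos in \<open>simp add: field_simps\<close>)
  also have "\<dots> < ereal (real k powr \<alpha>)"
    using \<open>2 \<le> k\<close> by simp
  finally show ?thesis
    using \<open>2 \<le> k\<close> by blast
qed

lemma upper_matuszewska_lessE:
  assumes "upper_matuszewska f < ereal \<alpha>"
  obtains a C where "a < \<alpha>" "0 < C"
    "\<And>\<Lambda>. 1 < \<Lambda> \<Longrightarrow> \<forall>\<^sub>F x in at_top. \<forall>t\<in>{1..\<Lambda>}. f (t * x) / (t powr a * f x) < C"
proof -
  obtain a where "ereal a < ereal \<alpha>"
    and "\<exists>C>0. \<forall>\<Lambda>>1. Limsup at_top (\<lambda>x. SUP t\<in>{1..\<Lambda>}. ereal (f (t * x) / (t powr a * f x))) \<le> ereal C"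
    using assms unfolding upper_matuszewska_def Inf_less_iff by blast
  then obtain C where "0 < C"
    and lim: "\<And>\<Lambda>. 1 < \<Lambda> \<Longrightarrow> Limsup at_top (\<lambda>x. SUP t\<in>{1..\<Lambda>}. ereal (f (t * x) / (t powr a * f x))) \<le> ereal C"
    by blast
  have "\<forall>\<^sub>F x in at_top. \<forall>t\<in>{1..\<Lambda>}. f (t * x) / (t powr a * f x) < C + 1" if "1 < \<Lambda>" for \<Lambda>
  proof -
    have "\<forall>\<^sub>F x in at_top. (SUP t\<in>{1..\<Lambda>}. ereal (f (t * x) / (t powr a * f x))) < ereal (C + 1)"
      using that by (intro Limsup_lessD le_less_trans[OF lim]) auto
    then show ?thesis
    proof eventually_elim
      case (elim x)
      show ?case
      proof
        fix t
        assume "t \<in> {1..\<Lambda>}"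
        then have "ereal (f (t * x) / (t powr a * f x)) < ereal (C + 1)"
          using elim by (rule le_less_trans[OF SUP_upper])
        then show "f (t * x) / (t powr a * f x) < C + 1"
          by simp
      qed
    qed
  qed
  moreover have "a < \<alpha>" "0 < C + 1"
    using \<open>ereal a < ereal \<alpha>\<close> \<open>0 < C\<close> by simp_all
  ultimately show ?thesis
    using that by blast
qed

lemma alpha_index_less_imp_dilation_below_powr:
  fixes m :: "nat \<Rightarrow> real"
  assumes pos: "\<And>p. 0 < m p" and "0 < \<alpha>" and "alpha_index m < ereal \<alpha>"
  shows "dilation_below_powr m \<alpha>"
proof -
  let ?f = "\<lambda>x::real. m (nat \<lfloor>x\<rfloor> - 1)"
  obtain a C where "a < \<alpha>" "0 < C"
    and bound: "\<And>\<Lambda>. 1 < \<Lambda> \<Longrightarrow> \<forall>\<^sub>F x in at_top. \<forall>t\<in>{1..\<Lambda>}. ?f (t * x) / (t powr a * ?f x) < C"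
    using upper_matuszewska_lessE[OF assms(3)[unfolded alpha_index_def]] by blast
  define a' where "a' = max a 0"
  have "0 \<le> a'" "a \<le> a'" "a' < \<alpha>"
    using \<open>a < \<alpha>\<close> \<open>0 < \<alpha>\<close> by (auto simp: a'_def)
  obtain k :: nat where "2 \<le> k" and k: "C < real k powr (\<alpha> - a')"
    using exists_nat_powr_gt \<open>a' < \<alpha>\<close> by (metis diff_gt_0_iff_gt)
  have "\<forall>\<^sub>F x in at_top. \<forall>t\<in>{1..real k}. ?f (t * x) / (t powr a * ?f x) < C"
    using bound[of "real k"] \<open>2 \<le> k\<close> by simp
  then obtain X where X: "\<And>x. X \<le> x \<Longrightarrow> \<forall>t\<in>{1..real k}. ?f (t * x) / (t powr a * ?f x) < C"
    unfolding eventually_at_top_linorder by blast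
  show ?thesis
  proof (rule dilation_below_powrI[OF \<open>2 \<le> k\<close>, of "C * real k powr a'" _ "nat \<lceil>X\<rceil>"])
    have "C * real k powr a' < real k powr (\<alpha> - a') * real k powr a'"
      using k \<open>2 \<le> k\<close> by simp
    then show "C * real k powr a' < real k powr \<alpha>"
      by (simp flip: powr_add)
    fix p
    assume "nat \<lceil>X\<rceil> \<le> p"
    define t where "t = real (k * p + 1) / real (p + 1)"
    have "1 \<le> t" "t \<le> real k"
      using \<open>2 \<le> k\<close> by (auto simp: t_def field_simps mult_le_cancel_right1)
    have t_scaled: "t * real (p + 1) = real (k * p + 1)"
      by (simp add: t_def)
    have "?f (t * real (p + 1)) = m (k * p)" and "?f (real (p + 1)) = m p"
      unfolding t_scaled floor_of_nat nat_int by simp_all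
    moreover have "?f (t * real (p + 1)) / (t powr a * ?f (real (p + 1))) < C"
      using \<open>nat \<lceil>X\<rceil> \<le> p\<close> \<open>1 \<le> t\<close> \<open>t \<le> real k\<close> by (intro X[rule_format]) auto
    ultimately have "m (k * p) \<le> C * (t powr a * m p)"
      using pos[of p] \<open>1 \<le> t\<close> by (simp add: field_simps)
    also have "\<dots> \<le> C * (real k powr a' * m p)"
    proof -
      have "t powr a \<le> t powr a'"
        using \<open>a \<le> a'\<close> \<open>1 \<le> t\<close> by (rule powr_mono)
      also have "\<dots> \<le> real k powr a'"
        using \<open>1 \<le> t\<close> \<open>t \<le> real k\<close> \<open>0 \<le> a'\<close> by (intro powr_mono2) auto
      finally show ?thesis
        using \<open>0 < C\<close> pos[of p] by (intro mult_left_mono mult_right_mono) auto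
    qed
    finally show "m (k * p) \<le> C * real k powr a' * m p"
      by (simp add: mult.assoc)
  qed
qed

lemma dilation_iterate:
  fixes m :: "nat \<Rightarrow> real" and k N :: nat
  assumes mono: "mono m" and pos: "\<And>p. 0 < m p" and "2 \<le> k" "1 \<le> N" "0 \<le> \<beta>"
    and dil: "\<And>p. N \<le> p \<Longrightarrow> m (k * p) \<le> real k powr \<beta> * m p"
    and "N \<le> p" "p \<le> q"
  shows "m q \<le> real k powr \<beta> * (real q / real p) powr \<beta> * m p"
  using \<open>N \<le> p\<close> \<open>p \<le> q\<close>
proof (induction "q - p" arbitrary: p rule: less_induct)
  case less
  have "1 \<le> p"
    using less.prems \<open>1 \<le> N\<close> by simp
  show ?case
  proof (cases "q < k * p")
    case True
    have "1 \<le> (real q / real p) powr \<beta>"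
      using \<open>1 \<le> p\<close> less.prems \<open>0 \<le> \<beta>\<close> by (intro ge_one_powr_ge_zero) auto
    have "m q \<le> m (k * p)"
      using True mono by (simp add: monoD)
    also have "\<dots> \<le> real k powr \<beta> * 1 * m p"
      using dil less.prems by simp
    also have "\<dots> \<le> real k powr \<beta> * (real q / real p) powr \<beta> * m p"
      using \<open>1 \<le> (real q / real p) powr \<beta>\<close> pos[of p] by (intro mult_right_mono mult_left_mono) auto
    finally show ?thesis .
  next
    case False
    have "p < k * p"
      using \<open>1 \<le> p\<close> \<open>2 \<le> k\<close> by simp
    moreover have "N \<le> k * p" "k * p \<le> q"
      using less.prems False \<open>p < k * p\<close> by linarith+
    moreover have "q - k * p < q - p"
      using \<open>p < k * p\<close> \<open>k * p \<le> q\<close> by (meson diff_less_mono2 less_le_trans)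
    ultimately have "m q \<le> real k powr \<beta> * (real q / real (k * p)) powr \<beta> * m (k * p)"
      using less.hyps[of "k * p"] by blast
    also have "\<dots> \<le> real k powr \<beta> * (real q / real (k * p)) powr \<beta> * (real k powr \<beta> * m p)"
      using dil[of p] less.prems by (intro mult_left_mono) auto
    also have "\<dots> = real k powr \<beta> * (real q / real p) powr \<beta> * m p"
    proof -
      have "(real q / real (k * p)) powr \<beta> * real k powr \<beta> = (real q / real p) powr \<beta>"
        using \<open>2 \<le> k\<close> by (simp flip: powr_mult)
      then show ?thesis
        by (simp add: mult_ac)
    qed
    finally show ?thesis .
  qed
qed

lemma dilation_iterate_shifted:
  fixes m :: "nat \<Rightarrow> real" and k N :: nat
  assumes mono: "mono m" and pos: "\<And>p. 0 < m p" and "2 \<le> k" "1 \<le> N" "0 \<le> \<beta>"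
    and dil: "\<And>p. N \<le> p \<Longrightarrow> m (k * p) \<le> real k powr \<beta> * m p"
    and "N \<le> p" "p \<le> q"
  shows "m q / real (q + 1) powr \<beta> \<le> (2 * real k) powr \<beta> * (m p / real (p + 1) powr \<beta>)"
proof -
  have "1 \<le> p"
    using assms(4,7) by simp
  have "real q / real p / real (q + 1) = real q / real (q + 1) * (1 / real p)"
    by simp
  also have "\<dots> \<le> 1 * (2 / real (p + 1))"
    using \<open>1 \<le> p\<close> by (intro mult_mono) (auto simp: field_simps)
  finally have ratio: "(real q / real p) powr \<beta> / real (q + 1) powr \<beta> \<le> 2 powr \<beta> / real (p + 1) powr \<beta>"
    using \<open>0 \<le> \<beta>\<close> by (simp add: powr_mono2 flip: powr_divide)
  have "m q / real (q + 1) powr \<beta> \<le> real k powr \<beta> * (real q / real p) powr \<beta> * m p / real (q + 1) powr \<beta>"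
    using dilation_iterate[OF assms] by (intro divide_right_mono) auto
  also have "\<dots> = real k powr \<beta> * m p * ((real q / real p) powr \<beta> / real (q + 1) powr \<beta>)"
    by simp
  also have "\<dots> \<le> real k powr \<beta> * m p * (2 powr \<beta> / real (p + 1) powr \<beta>)"
    using ratio pos[of p] by (intro mult_left_mono) auto
  also have "\<dots> = (2 * real k) powr \<beta> * (m p / real (p + 1) powr \<beta>)"
    by (simp add: powr_mult)
  finally show ?thesis .
qed

lemma eventual_ratio_bound_extend:
  fixes b :: "nat \<Rightarrow> real"
  assumes pos: "\<And>p. 0 < b p" and ev: "\<And>p q. N \<le> p \<Longrightarrow> p \<le> q \<Longrightarrow> b q \<le> C * b p"
  obtains D where "\<And>p q. p \<le> q \<Longrightarrow> b q \<le> D * b p"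
proof -
  define U where "U = Max (b ` {..N})"
  define L where "L = Min (b ` {..N})"
  have U: "b p \<le> U" if "p \<le> N" for p
    unfolding U_def using that by simp
  have L: "L \<le> b p" if "p \<le> N" for p
    unfolding L_def using that by simp
  have "0 < L"
    unfolding L_def using pos by simp
  have "L \<le> U"
    using L[of N] U[of N] by simp
  have bounded: "b q \<le> max 1 C * U" for q
  proof (cases "q \<le> N")
    case True
    have "U \<le> max 1 C * U"
      using \<open>0 < L\<close> \<open>L \<le> U\<close> by (simp add: mult_le_cancel_right1)
    then show ?thesis
      using U[OF True] by linarith
  next
    case False
    then have "b q \<le> C * b N"
      using ev[of N q] by simp
    also have "\<dots> \<le> max 1 C * U"
      using U[of N] pos[of N] by (intro mult_mono) auto
    finally show ?thesis .
  qed
  define D where "D = max 1 C * U / L"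
  have "C \<le> D"
  proof -
    have "max 1 C * 1 \<le> max 1 C * (U / L)"
      using \<open>0 < L\<close> \<open>L \<le> U\<close> by (intro mult_left_mono) auto
    then show ?thesis
      by (simp add: D_def)
  qed
  show thesis
  proof (rule that)
    fix p q :: nat
    assume "p \<le> q"
    show "b q \<le> D * b p"
    proof (cases "N \<le> p")
      case True
      then show ?thesis
        using ev[OF True \<open>p \<le> q\<close>] mult_right_mono[OF \<open>C \<le> D\<close> less_imp_le[OF pos[of p]]]
        by linarith
    next
      case False
      have "b q \<le> D * L"
        using bounded[of q] \<open>0 < L\<close> by (simp add: D_def)
      also have "\<dots> \<le> D * b p"
        using L[of p] False \<open>0 < L\<close> \<open>L \<le> U\<close> by (intro mult_left_mono) (auto simp: D_def)
      finally show ?thesis .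
    qed
  qed
qed

lemma exists_powr_exponent_between:
  fixes k B \<alpha> :: real
  assumes "1 < k" "0 < \<alpha>" "B < k powr \<alpha>"
  obtains \<beta> where "0 < \<beta>" "\<beta> < \<alpha>" "B < k powr \<beta>"
proof -
  define \<gamma> where "\<gamma> = log k (max B 1)"
  have "max B 1 < k powr \<alpha>"
    using assms by (simp add: less_powr_iff)
  then have "0 \<le> \<gamma>" "\<gamma> < \<alpha>"
    using \<open>1 < k\<close> by (simp_all add: \<gamma>_def log_less_iff)
  then have "log k (max B 1) < (\<alpha> + \<gamma>) / 2"
    by (simp add: \<gamma>_def)
  then have "max B 1 < k powr ((\<alpha> + \<gamma>) / 2)"
    using \<open>1 < k\<close> by (subst (asm) log_less_iff) auto
  then show ?thesis
    using that[of "(\<alpha> + \<gamma>) / 2"] \<open>0 \<le> \<gamma>\<close> \<open>\<gamma> < \<alpha>\<close> by simp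
qed

lemma dilation_below_powr_imp_growth_le_powr:
  fixes m :: "nat \<Rightarrow> real"
  assumes pos: "\<And>p. 0 < m p" and mono: "mono m" and "0 < \<alpha>" and "dilation_below_powr m \<alpha>"
  obtains \<beta> D where "0 < \<beta>" "\<beta> < \<alpha>" "growth_le_powr m \<beta> D"
proof -
  obtain k B N0 where "2 \<le> k" "B < real k powr \<alpha>" and N0: "\<And>p. N0 \<le> p \<Longrightarrow> m (k * p) \<le> B * m p"
    using assms(4) unfolding dilation_below_powr_def eventually_sequentially by blast
  obtain \<beta> where "0 < \<beta>" "\<beta> < \<alpha>" "B < real k powr \<beta>"
    using exists_powr_exponent_between[of "real k" \<alpha> B] \<open>2 \<le> k\<close> \<open>0 < \<alpha>\<close> \<open>B < real k powr \<alpha>\<close> by auto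
  define N where "N = max N0 1"
  have dil: "m (k * p) \<le> real k powr \<beta> * m p" if "N \<le> p" for p
  proof -
    have "m (k * p) \<le> B * m p"
      using N0 that by (simp add: N_def)
    also have "\<dots> \<le> real k powr \<beta> * m p"
      using \<open>B < real k powr \<beta>\<close> pos[of p] by (intro mult_right_mono) auto
    finally show ?thesis .
  qed
  have eventual_bound: "m q / real (q + 1) powr \<beta> \<le> (2 * real k) powr \<beta> * (m p / real (p + 1) powr \<beta>)"
    if "N \<le> p" "p \<le> q" for p q
    using dilation_iterate_shifted[OF mono pos \<open>2 \<le> k\<close> _ _ dil that] \<open>0 < \<beta>\<close> by (simp add: N_def)
  have "0 < m p / real (p + 1) powr \<beta>" for p
    using pos[of p] by simp
  then obtain D where "\<And>p q. p \<le> q \<Longrightarrow> m q / real (q + 1) powr \<beta> \<le> D * (m p / real (p + 1) powr \<beta>)"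
    using eventual_ratio_bound_extend[of "\<lambda>p. m p / real (p + 1) powr \<beta>" N "(2 * real k) powr \<beta>"]
      eventual_bound by blast
  then show ?thesis
    using that \<open>0 < \<beta>\<close> \<open>\<beta> < \<alpha>\<close> unfolding growth_le_powr_def by blast
qed

section \<open>Doubling estimates\<close>

(* The common consequence of (i), (iii) and (viii), from which (vi) follows. *)
definition doubling_below_powr :: "(nat \<Rightarrow> real) \<Rightarrow> real \<Rightarrow> bool" where
  "doubling_below_powr m \<alpha> \<longleftrightarrow>
     (\<exists>A s. 0 < A \<and> 0 < s \<and> s < 2 powr \<alpha> \<and> (\<forall>n p. 1 \<le> p \<longrightarrow> m (2 ^ n * p) \<le> A * s ^ n * m p))"

lemma doubling_iterate:
  fixes f :: "nat \<Rightarrow> real"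
  assumes "0 \<le> s" and step: "\<And>p. 1 \<le> p \<Longrightarrow> f (2 * p) \<le> s * f p" and "1 \<le> p"
  shows "f (2 ^ n * p) \<le> s ^ n * f p"
proof (induction n)
  case (Suc n)
  have "f (2 ^ Suc n * p) = f (2 * (2 ^ n * p))"
    by (simp add: mult.assoc)
  also have "\<dots> \<le> s * f (2 ^ n * p)"
    using \<open>1 \<le> p\<close> by (intro step) simp
  also have "\<dots> \<le> s * (s ^ n * f p)"
    using Suc.IH \<open>0 \<le> s\<close> by (rule mult_left_mono)
  finally show ?case
    by (simp add: mult.assoc)
qed simp

lemma power_powr:
  fixes x :: real
  assumes "0 \<le> x"
  shows "(x ^ n) powr a = (x powr a) ^ n"
  by (induction n) (simp_all add: powr_mult assms)

lemma doubling_below_powr_imp_uniform_dilation: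
  fixes m :: "nat \<Rightarrow> real"
  assumes pos: "\<And>p. 0 < m p" and "doubling_below_powr m \<alpha>"
  shows "\<forall>\<theta>. 0 < \<theta> \<and> \<theta> < 1 \<longrightarrow> (\<exists>k::nat. 2 \<le> k \<and> (\<forall>p\<ge>1. m (k * p) \<le> \<theta> * real k powr \<alpha> * m p))"
proof (intro allI impI)
  fix \<theta> :: real
  assume \<theta>: "0 < \<theta> \<and> \<theta> < 1"
  obtain A s where "0 < A" "0 < s" "s < 2 powr \<alpha>"
    and bound: "\<And>n p. 1 \<le> p \<Longrightarrow> m (2 ^ n * p) \<le> A * s ^ n * m p"
    using assms(2) unfolding doubling_below_powr_def by blast
  define r where "r = s / 2 powr \<alpha>"
  have "0 < r" "r < 1"
    using \<open>0 < s\<close> \<open>s < 2 powr \<alpha>\<close> by (simp_all add: r_def)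
  then obtain n where "r ^ n < \<theta> / A"
    using real_arch_pow_inv[of "\<theta> / A" r] \<theta> \<open>0 < A\<close> by auto
  have "A * r ^ Suc n \<le> A * r ^ n"
    using \<open>0 < A\<close> \<open>0 < r\<close> \<open>r < 1\<close> by (intro mult_left_mono power_decreasing) auto
  also have "\<dots> < \<theta>"
    using \<open>r ^ n < \<theta> / A\<close> \<open>0 < A\<close> by (simp add: field_simps)
  finally have "A * r ^ Suc n \<le> \<theta>"
    by simp
  show "\<exists>k::nat. 2 \<le> k \<and> (\<forall>p\<ge>1. m (k * p) \<le> \<theta> * real k powr \<alpha> * m p)"
  proof (intro exI[of _ "2 ^ Suc n"] conjI allI impI)
    show "2 \<le> (2::nat) ^ Suc n"
      by simp
    fix p :: nat
    assume "1 \<le> p"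
    have "m (2 ^ Suc n * p) \<le> A * s ^ Suc n * m p"
      using bound[OF \<open>1 \<le> p\<close>] .
    also have "\<dots> = A * r ^ Suc n * ((2 powr \<alpha>) ^ Suc n * m p)"
      by (simp add: r_def power_divide)
    also have "\<dots> \<le> \<theta> * ((2 powr \<alpha>) ^ Suc n * m p)"
      using \<open>A * r ^ Suc n \<le> \<theta>\<close> pos[of p] by (intro mult_right_mono) auto
    also have "\<dots> = \<theta> * real ((2::nat) ^ Suc n) powr \<alpha> * m p"
      using power_powr[of 2 "Suc n" \<alpha>] by simp
    finally show "m (2 ^ Suc n * p) \<le> \<theta> * real ((2::nat) ^ Suc n) powr \<alpha> * m p" .
  qed
qed

lemma contracting_comparable_imp_doubling_below_powr:
  fixes m T :: "nat \<Rightarrow> real"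
  assumes pos: "\<And>p. 0 < m p" and "0 \<le> \<alpha>" "0 < a" "1 < q"
    and lower: "\<And>p. a * (m p / real (p + 1) powr \<alpha>) \<le> T p"
    and upper: "\<And>p. T p \<le> b * (m p / real (p + 1) powr \<alpha>)"
    and contract: "\<And>p. 1 \<le> p \<Longrightarrow> q * T (2 * p) \<le> T p"
  shows "doubling_below_powr m \<alpha>"
proof -
  define u where "u p = m p / real (p + 1) powr \<alpha>" for p
  have u_pos: "0 < u p" for p
    using pos[of p] by (simp add: u_def)
  have "a * u 0 \<le> b * u 0"
    using lower[of 0] upper[of 0] by (simp add: u_def)
  moreover have "0 < a * u 0"
    using u_pos[of 0] \<open>0 < a\<close> by simp
  ultimately have "0 < b * u 0"
    by linarith
  then have "0 < b"
    using u_pos[of 0] by (simp add: zero_less_mult_iff)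
  have bound: "m (2 ^ n * p) \<le> b / a * (2 powr \<alpha> / q) ^ n * m p" if "1 \<le> p" for n p
  proof -
    have "a * u (2 ^ n * p) \<le> T (2 ^ n * p)"
      using lower[of "2 ^ n * p"] by (simp add: u_def)
    also have "\<dots> \<le> (1 / q) ^ n * T p"
    proof (rule doubling_iterate[OF _ _ \<open>1 \<le> p\<close>])
      show "T (2 * p) \<le> 1 / q * T p" if "1 \<le> p" for p
        using contract[OF that] \<open>1 < q\<close> by (simp add: field_simps)
    qed (use \<open>1 < q\<close> in simp)
    also have "\<dots> \<le> (1 / q) ^ n * (b * u p)"
      using upper[of p] \<open>1 < q\<close> by (intro mult_left_mono) (auto simp: u_def)
    finally have "u (2 ^ n * p) \<le> b / a * (1 / q) ^ n * u p"
      using \<open>0 < a\<close> \<open>1 < q\<close> zero_less_power[of q n] by (simp add: field_simps)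
    then have "m (2 ^ n * p) \<le> b / a * (1 / q) ^ n * real (2 ^ n) powr \<alpha> * m p"
      using \<open>0 \<le> \<alpha>\<close> \<open>0 < a\<close> \<open>0 < b\<close> \<open>1 < q\<close> pos[of p]
      by (intro dilation_of_weighted_bound) (auto simp: u_def)
    also have "\<dots> = b / a * (2 powr \<alpha> / q) ^ n * m p"
      using power_powr[of 2 n \<alpha>] by (simp add: power_divide field_simps)
    finally show ?thesis .
  qed
  have "0 < 2 powr \<alpha> / q" "2 powr \<alpha> / q < 2 powr \<alpha>"
    using \<open>1 < q\<close> by (simp_all add: divide_less_eq)
  then show ?thesis
    unfolding doubling_below_powr_def using bound \<open>0 < a\<close> \<open>0 < b\<close> by (blast intro: divide_pos_pos)
qed

lemma partial_sum_doubling: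
  fixes t :: "nat \<Rightarrow> real"
  assumes pos: "\<And>k. 0 < t k" and "0 < C"
    and bound: "\<And>p. (\<Sum>k\<le>p. t k) \<le> C * real (p + 1) * t p" and "1 \<le> p"
  shows "(1 + 1 / (3 * C)) * (\<Sum>k\<le>p. t k) \<le> (\<Sum>k\<le>2 * p. t k)"
proof -
  define S where "S p = (\<Sum>k\<le>p. t k)" for p
  have "0 < S p"
    unfolding S_def using pos by (intro sum_pos) auto
  have "S p / (C * real (2 * p + 1)) \<le> t k" if "k \<in> {Suc p..p + p}" for k
  proof -
    have "S p \<le> S k"
      unfolding S_def using that pos by (intro sum_mono2) (auto intro: less_imp_le)
    then have "S p / (C * real (2 * p + 1)) \<le> S k / (C * real (k + 1))"
      using that \<open>0 < C\<close> \<open>0 < S p\<close> by (intro frac_le) auto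
    also have "\<dots> \<le> t k"
      using bound[of k] \<open>0 < C\<close> by (simp add: S_def divide_le_eq mult_ac)
    finally show ?thesis .
  qed
  then have "real p * (S p / (C * real (2 * p + 1))) \<le> (\<Sum>k = Suc p..p + p. t k)"
    using sum_mono[of "{Suc p..p + p}" "\<lambda>_. S p / (C * real (2 * p + 1))" t] by simp
  moreover have "S p / (3 * C) \<le> real p * (S p / (C * real (2 * p + 1)))"
  proof -
    have "1 / 3 \<le> real p / real (2 * p + 1)"
      using \<open>1 \<le> p\<close> by (simp add: field_simps)
    then have "S p / C * (1 / 3) \<le> S p / C * (real p / real (2 * p + 1))"
      using \<open>0 < S p\<close> \<open>0 < C\<close> by (intro mult_left_mono) auto
    then show ?thesis
      by (simp add: field_simps)
  qed
  moreover have "S (2 * p) = S p + (\<Sum>k = Suc p..p + p. t k)"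
    unfolding S_def mult_2 by (rule sum_up_index_split)
  moreover have "(1 + 1 / (3 * C)) * S p = S p + S p / (3 * C)"
    by (simp add: distrib_right)
  ultimately have "(1 + 1 / (3 * C)) * S p \<le> S (2 * p)"
    by linarith
  then show ?thesis
    by (simp only: S_def)
qed

lemma tail_sum_doubling:
  fixes f :: "nat \<Rightarrow> real"
  assumes nonneg: "\<And>k. 0 \<le> f k" and "0 < C" and "summable f"
    and bound: "\<And>p. (\<Sum>j. f (p + 1 + j)) \<le> C * real (p + 1) * f p" and "1 \<le> p"
  shows "(1 + 1 / (3 * C)) * (\<Sum>j. f (2 * p + 1 + j)) \<le> (\<Sum>j. f (p + 1 + j))"
proof -
  define T where "T p = (\<Sum>j. f (p + 1 + j))" for p
  have summable_tail: "summable (\<lambda>j. f (p + 1 + j))" for p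
    using summable_iff_shift[of f "p + 1"] \<open>summable f\<close> by (simp add: add.commute)
  have T_nonneg: "0 \<le> T p" for p
    unfolding T_def using summable_tail nonneg by (rule suminf_nonneg)
  have split: "T p = (\<Sum>j<d. f (p + 1 + j)) + T (p + d)" for p d
  proof -
    have "T p = (\<Sum>j. f (p + 1 + (j + d))) + (\<Sum>j<d. f (p + 1 + j))"
      unfolding T_def by (rule suminf_split_initial_segment[OF summable_tail])
    then show ?thesis
      by (simp add: T_def ac_simps)
  qed
  have T_antimono: "T j \<le> T p" if "p \<le> j" for p j
    using split[of p "j - p"] that nonneg by (simp add: sum_nonneg)
  have "T (2 * p) / (C * real (2 * p + 1)) \<le> f (p + 1 + j)" if "j < p" for j
  proof -
    have "T (2 * p) / (C * real (2 * p + 1)) \<le> T (p + 1 + j) / (C * real (p + 1 + j + 1))"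
      using that \<open>0 < C\<close> T_nonneg T_antimono[of "p + 1 + j" "2 * p"] by (intro frac_le) auto
    also have "\<dots> \<le> f (p + 1 + j)"
      using bound[of "p + 1 + j"] \<open>0 < C\<close> by (simp add: T_def divide_le_eq mult_ac)
    finally show ?thesis .
  qed
  then have "real p * (T (2 * p) / (C * real (2 * p + 1))) \<le> (\<Sum>j<p. f (p + 1 + j))"
    using sum_mono[of "{..<p}" "\<lambda>_. T (2 * p) / (C * real (2 * p + 1))" "\<lambda>j. f (p + 1 + j)"] by simp
  moreover have "T (2 * p) / (3 * C) \<le> real p * (T (2 * p) / (C * real (2 * p + 1)))"
  proof -
    have "1 / 3 \<le> real p / real (2 * p + 1)"
      using \<open>1 \<le> p\<close> by (simp add: field_simps)
    then have "T (2 * p) / C * (1 / 3) \<le> T (2 * p) / C * (real p / real (2 * p + 1))"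
      using T_nonneg \<open>0 < C\<close> by (intro mult_left_mono) auto
    then show ?thesis
      by (simp add: field_simps)
  qed
  moreover have "T p = (\<Sum>j<p. f (p + 1 + j)) + T (2 * p)"
    using split[of p p] by (simp only: mult_2)
  moreover have "(1 + 1 / (3 * C)) * T (2 * p) = T (2 * p) + T (2 * p) / (3 * C)"
    by (simp add: distrib_right)
  ultimately have "(1 + 1 / (3 * C)) * T (2 * p) \<le> T p"
    by linarith
  then show ?thesis
    by (simp only: T_def)
qed

lemma mono_partial_sum_ge:
  fixes m :: "nat \<Rightarrow> real"
  assumes pos: "\<And>p. 0 < m p" and mono: "mono m" and "0 < \<alpha>"
  shows "min 1 (1 / \<alpha>) * real (p + 1) powr \<alpha> / m p \<le> (\<Sum>k\<le>p. real (k + 1) powr (\<alpha> - 1) / m k)"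
proof -
  have "min 1 (1 / \<alpha>) * real (p + 1) powr \<alpha> / m p \<le> (\<Sum>k<Suc p. real (k + 1) powr (\<alpha> - 1)) / m p"
    using sum_powr_ge[OF \<open>0 < \<alpha>\<close>, of "Suc p"] pos[of p] by (intro divide_right_mono) auto
  also have "\<dots> = (\<Sum>k\<le>p. real (k + 1) powr (\<alpha> - 1) / m p)"
    by (simp add: sum_divide_distrib lessThan_Suc_atMost)
  also have "\<dots> \<le> (\<Sum>k\<le>p. real (k + 1) powr (\<alpha> - 1) / m k)"
    using mono pos by (intro sum_mono divide_left_mono) (auto simp: monoD)
  finally show ?thesis .
qed

lemma mono_tail_sum_ge:
  fixes m :: "nat \<Rightarrow> real"
  assumes pos: "\<And>p. 0 < m p" and mono: "mono m" and "0 \<le> \<alpha>"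
    and summable: "summable (\<lambda>j. m (p + 1 + j) / real (p + 1 + j + 1) powr (1 + \<alpha>))"
  shows "1 / 2 powr (1 + \<alpha>) * (m p / real (p + 1) powr \<alpha>)
    \<le> (\<Sum>j. m (p + 1 + j) / real (p + 1 + j + 1) powr (1 + \<alpha>))"
proof -
  have "m p / (2 * real (p + 1)) powr (1 + \<alpha>) \<le> m (p + 1 + j) / real (p + 1 + j + 1) powr (1 + \<alpha>)"
    if "j < Suc p" for j
    using that mono pos \<open>0 \<le> \<alpha>\<close> by (intro frac_le powr_mono2) (auto simp: monoD less_imp_le)
  then have "real (p + 1) * (m p / (2 * real (p + 1)) powr (1 + \<alpha>))
      \<le> (\<Sum>j<Suc p. m (p + 1 + j) / real (p + 1 + j + 1) powr (1 + \<alpha>))"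
    using sum_mono[of "{..<Suc p}" "\<lambda>_. m p / (2 * real (p + 1)) powr (1 + \<alpha>)"
        "\<lambda>j. m (p + 1 + j) / real (p + 1 + j + 1) powr (1 + \<alpha>)"] by simp
  also have "\<dots> \<le> (\<Sum>j. m (p + 1 + j) / real (p + 1 + j + 1) powr (1 + \<alpha>))"
    using summable pos by (intro sum_le_suminf) (auto intro: less_imp_le)
  also have "(2 * real (p + 1)) powr (1 + \<alpha>) = 2 powr (1 + \<alpha>) * (real (p + 1) * real (p + 1) powr \<alpha>)"
    by (subst powr_mult) (simp_all add: powr_mult_base)
  finally have lower: "real (p + 1) * (m p / (2 powr (1 + \<alpha>) * (real (p + 1) * real (p + 1) powr \<alpha>)))
      \<le> (\<Sum>j. m (p + 1 + j) / real (p + 1 + j + 1) powr (1 + \<alpha>))" .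
  have cancel: "x * (u / (A * (x * X))) = 1 / A * (u / X)" if "x \<noteq> 0" "A \<noteq> 0" "X \<noteq> 0"
    for x u A X :: real
    using that by (simp add: field_simps)
  have "real (p + 1) \<noteq> 0"
    by (simp only: of_nat_eq_0_iff add_eq_0_iff_both_eq_0 one_neq_zero simp_thms)
  then have "real (p + 1) * (m p / (2 powr (1 + \<alpha>) * (real (p + 1) * real (p + 1) powr \<alpha>)))
      = 1 / 2 powr (1 + \<alpha>) * (m p / real (p + 1) powr \<alpha>)"
    by (intro cancel) simp_all
  with lower show ?thesis
    by linarith
qed

lemma partial_sum_bound_imp_doubling_below_powr:
  fixes m :: "nat \<Rightarrow> real"
  assumes pos: "\<And>p. 0 < m p" and mono: "mono m" and "0 < \<alpha>"
    and "\<exists>C>0. \<forall>p. (\<Sum>k\<le>p. real (k + 1) powr (\<alpha> - 1) / m k) \<le> C * real (p + 1) powr \<alpha> / m p"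
  shows "doubling_below_powr m \<alpha>"
proof -
  obtain C where "0 < C" and bound: "\<And>p. (\<Sum>k\<le>p. real (k + 1) powr (\<alpha> - 1) / m k) \<le> C * real (p + 1) powr \<alpha> / m p"
    using assms(4) by blast
  define t where "t k = real (k + 1) powr (\<alpha> - 1) / m k" for k
  define S where "S p = (\<Sum>k\<le>p. t k)" for p
  define c where "c = min 1 (1 / \<alpha>)"
  have "0 < c"
    using \<open>0 < \<alpha>\<close> by (simp add: c_def)
  have t_pos: "0 < t k" for k
    using pos[of k] by (simp add: t_def)
  have S_pos: "0 < S p" for p
    unfolding S_def using t_pos by (intro sum_pos) auto
  have powr_split: "real (p + 1) powr \<alpha> = real (p + 1) * real (p + 1) powr (\<alpha> - 1)" for p
    by (simp add: powr_mult_base)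
  have S_upper: "S p \<le> C * real (p + 1) * t p" for p
    using bound[of p] unfolding powr_split S_def t_def by simp
  show ?thesis
  proof (rule contracting_comparable_imp_doubling_below_powr[of m \<alpha> "1 / C" "1 + 1 / (3 * C)" "\<lambda>p. 1 / S p" "1 / c"])
    show "1 / C * (m p / real (p + 1) powr \<alpha>) \<le> 1 / S p" for p
      using bound[of p] S_pos[of p] \<open>0 < C\<close> pos[of p] by (simp add: S_def t_def field_simps)
    show "1 / S p \<le> 1 / c * (m p / real (p + 1) powr \<alpha>)" for p
      using mono_partial_sum_ge[OF pos mono \<open>0 < \<alpha>\<close>, of p] S_pos[of p] \<open>0 < c\<close> pos[of p]
      by (simp add: S_def t_def c_def field_simps)
    show "(1 + 1 / (3 * C)) * (1 / S (2 * p)) \<le> 1 / S p" if "1 \<le> p" for p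
      using partial_sum_doubling[OF t_pos \<open>0 < C\<close> S_upper[unfolded S_def] that] S_pos[of p] S_pos[of "2 * p"]
      by (simp add: S_def field_simps)
  qed (use pos \<open>0 < \<alpha>\<close> \<open>0 < C\<close> in auto)
qed

lemma tail_bound_imp_doubling_below_powr:
  fixes m :: "nat \<Rightarrow> real"
  assumes pos: "\<And>p. 0 < m p" and mono: "mono m" and "0 < \<alpha>"
    and "\<exists>C>0. \<forall>p. summable (\<lambda>j. m (p + 1 + j) / real (p + 1 + j + 1) powr (1 + \<alpha>)) \<and>
           (\<Sum>j. m (p + 1 + j) / real (p + 1 + j + 1) powr (1 + \<alpha>)) \<le> C * m p / real (p + 1) powr \<alpha>"
  shows "doubling_below_powr m \<alpha>"
proof -
  obtain C where "0 < C"
    and summable: "\<And>p. summable (\<lambda>j. m (p + 1 + j) / real (p + 1 + j + 1) powr (1 + \<alpha>))"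
    and bound: "\<And>p. (\<Sum>j. m (p + 1 + j) / real (p + 1 + j + 1) powr (1 + \<alpha>)) \<le> C * m p / real (p + 1) powr \<alpha>"
    using assms(4) by blast
  define f where "f k = m k / real (k + 1) powr (1 + \<alpha>)" for k
  define T where "T p = (\<Sum>j. f (p + 1 + j))" for p
  have f_pos: "0 < f k" for k
    using pos[of k] by (simp add: f_def)
  have "summable f"
    using summable[of 0] summable_iff_shift[of f 1] by (simp add: f_def add.commute)
  have powr_split: "real (p + 1) powr (1 + \<alpha>) = real (p + 1) * real (p + 1) powr \<alpha>" for p
    by (simp add: powr_mult_base)
  have T_upper: "T p \<le> C * real (p + 1) * f p" for p
    using bound[of p] powr_split[of p] by (simp add: T_def f_def)
  show ?thesis
  proof (rule contracting_comparable_imp_doubling_below_powr[of m \<alpha> "1 / 2 powr (1 + \<alpha>)" "1 + 1 / (3 * C)" T C])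
    show "1 / 2 powr (1 + \<alpha>) * (m p / real (p + 1) powr \<alpha>) \<le> T p" for p
      unfolding T_def f_def using \<open>0 < \<alpha>\<close> by (intro mono_tail_sum_ge[OF pos mono _ summable]) simp
    show "T p \<le> C * (m p / real (p + 1) powr \<alpha>)" for p
      using bound[of p] by (simp add: T_def f_def)
    show "(1 + 1 / (3 * C)) * T (2 * p) \<le> T p" if "1 \<le> p" for p
      using tail_sum_doubling[OF less_imp_le[OF f_pos] \<open>0 < C\<close> \<open>summable f\<close> T_upper[unfolded T_def] that]
      by (simp add: T_def)
  qed (use pos \<open>0 < \<alpha>\<close> \<open>0 < C\<close> in auto)
qed

lemma regularization_imp_doubling_below_powr:
  fixes m h :: "nat \<Rightarrow> real"
  assumes pos: "\<And>p. 0 < m p" and "seq_equiv h m"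
    and sup: "(SUP p\<in>{1..}. ereal (h (2 * p) / h p)) < ereal (2 powr \<alpha>)"
  shows "doubling_below_powr m \<alpha>"
proof -
  obtain c where "1 \<le> c" and c: "\<And>p. m p / c \<le> h p \<and> h p \<le> c * m p"
    using \<open>seq_equiv h m\<close> unfolding seq_equiv_def by blast
  have h_pos: "0 < h p" for p
    using c[of p] pos[of p] \<open>1 \<le> c\<close> by (meson divide_pos_pos less_le_trans zero_less_one)
  obtain s where s: "(SUP p\<in>{1..}. ereal (h (2 * p) / h p)) < ereal s" "s < 2 powr \<alpha>"
    using ereal_dense2[OF sup] by auto
  have step: "h (2 * p) \<le> s * h p" if "1 \<le> p" for p
  proof -
    have "ereal (h (2 * p) / h p) < ereal s"
      using that s(1) by (intro le_less_trans[OF SUP_upper[of p]]) auto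
    then show ?thesis
      using h_pos[of p] by (simp add: divide_less_eq)
  qed
  have "0 < s * h 1"
    using step[of 1] h_pos[of 2] by simp
  then have "0 < s"
    using h_pos[of 1] by (simp add: zero_less_mult_iff)
  have "m (2 ^ n * p) \<le> c * c * s ^ n * m p" if "1 \<le> p" for n p
  proof -
    have "m (2 ^ n * p) \<le> c * h (2 ^ n * p)"
      using c[of "2 ^ n * p"] \<open>1 \<le> c\<close> by (simp add: field_simps)
    also have "\<dots> \<le> c * (s ^ n * h p)"
      using doubling_iterate[of s h, OF less_imp_le[OF \<open>0 < s\<close>] step that] \<open>1 \<le> c\<close> by simp
    also have "\<dots> \<le> c * (s ^ n * (c * m p))"
      using c[of p] \<open>1 \<le> c\<close> \<open>0 < s\<close> by (intro mult_left_mono) auto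
    finally show ?thesis
      by (simp add: mult_ac)
  qed
  then show ?thesis
    unfolding doubling_below_powr_def using \<open>1 \<le> c\<close> \<open>0 < s\<close> s(2) by (intro exI[of _ "c * c"] exI[of _ s]) auto
qed

section \<open>Weight sequences\<close>

lemma quotients_pos: "weight_sequence M \<Longrightarrow> 0 < quotients M p"
  unfolding weight_sequence_def quotients_def by simp

lemma mono_quotients:
  assumes "weight_sequence M"
  shows "mono (quotients M)"
proof (rule incseq_SucI)
  fix p
  have "0 < M p" "0 < M (Suc p)" and "(M (Suc p))\<^sup>2 \<le> M p * M (Suc (Suc p))"
    using assms unfolding weight_sequence_def by (auto dest: spec[of _ "Suc p"])
  then show "quotients M p \<le> quotients M (Suc p)"
    by (simp add: quotients_def divide_simps power2_eq_square mult.commute)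
qed

theorem theorem3p16:
  fixes M m :: "nat \<Rightarrow> real" and \<alpha> :: real
  assumes "weight_sequence M"
    and "m = quotients M"
    and "0 < \<alpha>"
  defines "P1 \<equiv> (\<exists>C>0. \<forall>p. (\<Sum>k\<le>p. real (k + 1) powr (\<alpha> - 1) / m k)
                              \<le> C * real (p + 1) powr \<alpha> / m p)"
    and "P2 \<equiv> (\<exists>\<epsilon>. 0 < \<epsilon> \<and> \<epsilon> < \<alpha> \<and>
                   almost_decreasing (\<lambda>p. m p / real p powr (\<alpha> - \<epsilon>)))"
    and "P3 \<equiv> (\<exists>h. seq_equiv h m \<and>
                   (\<forall>p. real (Suc p + 1) powr (- \<alpha>) * h (Suc p) \<le> real (p + 1) powr (- \<alpha>) * h p) \<and>
                   (SUP p\<in>{1..}. ereal (h (2 * p) / h p)) < ereal (2 powr \<alpha>))"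
    and "P4 \<equiv> ((\<lambda>k. limsup (\<lambda>p. ereal (m (k * p) / (real k powr \<alpha> * m p)))) \<longlonglongrightarrow> 0)"
    and "P5 \<equiv> (\<exists>k::nat. 2 \<le> k \<and> limsup (\<lambda>p. ereal (m (k * p) / m p)) < ereal (real k powr \<alpha>))"
    and "P6 \<equiv> (\<forall>\<theta>. 0 < \<theta> \<and> \<theta> < 1 \<longrightarrow>
                   (\<exists>k::nat. 2 \<le> k \<and> (\<forall>p\<ge>1. m (k * p) \<le> \<theta> * real k powr \<alpha> * m p)))"
    and "P7 \<equiv> (alpha_index m < ereal \<alpha>)"
    and "P8 \<equiv> (\<exists>C>0. \<forall>p. summable (\<lambda>j. m (p + 1 + j) / real (p + 1 + j + 1) powr (1 + \<alpha>)) \<and>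
                   (\<Sum>j. m (p + 1 + j) / real (p + 1 + j + 1) powr (1 + \<alpha>)) \<le> C * m p / real (p + 1) powr \<alpha>)"
  shows "(P1 \<longleftrightarrow> P2) \<and> (P2 \<longleftrightarrow> P3) \<and> (P3 \<longleftrightarrow> P4) \<and> (P4 \<longleftrightarrow> P5) \<and>
         (P5 \<longleftrightarrow> P6) \<and> (P6 \<longleftrightarrow> P7) \<and> (P7 \<longleftrightarrow> P8)"
proof -
  have pos: "\<And>p. 0 < m p" and mono: "mono m"
    using assms(1,2) quotients_pos mono_quotients by blast+
  have growth_imp: "P1 \<and> P2 \<and> P3 \<and> P4 \<and> P7 \<and> P8"
    if "0 < \<beta>" "\<beta> < \<alpha>" and growth: "growth_le_powr m \<beta> D" for \<beta> D
  proof (intro conjI)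
    show P1
      unfolding P1_def using growth_le_powr_imp_partial_sum_bound[OF pos growth \<open>\<beta> < \<alpha>\<close>] .
    show P2
      unfolding P2_def using growth_le_powr_imp_almost_decreasing[OF pos growth] that(1,2)
      by (intro exI[of _ "\<alpha> - \<beta>"]) simp
    show P3
      unfolding P3_def using that(1,2) by (intro growth_le_powr_imp_regularization[OF pos growth]) simp_all
    show P4
      unfolding P4_def using that(1,2) by (intro growth_le_powr_imp_limsup_dilation[OF pos growth]) simp_all
    show P7
      unfolding P7_def using growth_le_powr_imp_alpha_index_le[OF pos growth] that(1,2)
      by (simp add: le_less_trans)
    show P8
      unfolding P8_def using growth_le_powr_imp_tail_bound[OF pos growth \<open>\<beta> < \<alpha>\<close>] .
  qed
  have dilation_imp: "\<exists>\<beta> D. 0 < \<beta> \<and> \<beta> < \<alpha> \<and> growth_le_powr m \<beta> D" if "dilation_below_powr m \<alpha>"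
    using dilation_below_powr_imp_growth_le_powr[OF pos mono \<open>0 < \<alpha>\<close> that] by blast
  have P2_imp: "dilation_below_powr m \<alpha>" if P2
  proof -
    obtain \<epsilon> where "0 < \<epsilon>" "almost_decreasing (\<lambda>p. m p / real p powr (\<alpha> - \<epsilon>))"
      using \<open>P2\<close> unfolding P2_def by blast
    then show ?thesis
      by (intro almost_decreasing_imp_dilation_below_powr[OF pos, of "\<alpha> - \<epsilon>"]) simp_all
  qed
  have P4_imp: "dilation_below_powr m \<alpha>" if P4
    using that unfolding P4_def by (rule limsup_dilation_imp_dilation_below_powr[OF pos])
  have P5_imp: "dilation_below_powr m \<alpha>" if P5
    using that unfolding P5_def by (rule limsup_ratio_imp_dilation_below_powr[OF pos])
  have P7_imp: "dilation_below_powr m \<alpha>" if P7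
    using that unfolding P7_def by (rule alpha_index_less_imp_dilation_below_powr[OF pos \<open>0 < \<alpha>\<close>])
  have P1_imp: "doubling_below_powr m \<alpha>" if P1
    using that unfolding P1_def by (rule partial_sum_bound_imp_doubling_below_powr[OF pos mono \<open>0 < \<alpha>\<close>])
  have P3_imp: "doubling_below_powr m \<alpha>" if P3
    using that unfolding P3_def
    by (elim exE conjE) (rule regularization_imp_doubling_below_powr[where m = m, OF pos])
  have P8_imp: "doubling_below_powr m \<alpha>" if P8
    using that unfolding P8_def by (rule tail_bound_imp_doubling_below_powr[OF pos mono \<open>0 < \<alpha>\<close>])
  have doubling_imp_P6: P6 if "doubling_below_powr m \<alpha>"
    unfolding P6_def by (rule doubling_below_powr_imp_uniform_dilation[of m \<alpha>, OF pos that])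
  have P6_imp_P5: P5 if P6
    using that unfolding P5_def P6_def by (rule uniform_dilation_imp_limsup_ratio[OF pos])
  show ?thesis
    using growth_imp dilation_imp P2_imp P4_imp P5_imp P7_imp P1_imp P3_imp P8_imp doubling_imp_P6 P6_imp_P5
    by blast
qed

end
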